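(* Let $\mathcal{C}$ be a permutation class (resp. polyomino class) and let $\mathcal{M}$ be its canonical $m$-basis. The minimal $m$-bases of $\mathcal{C}$ are exactly the subsets $\mathcal{B}\subseteq\mathcal{M}$ that are minimal for inclusion among subsets satisfying $\mathcal{C}=Av_{\mathfrak{S}}(\mathcal{B})$ (resp. $\mathcal{C}=Av_{\mathfrak{P}}(\mathcal{B})$).
   Context: Binary matrices have entries in $\{0,1\}$; $M'\preccurlyeq M$ (submatrix order) means $M'$ is obtained from $M$ by deleting some rows and/or columns. A permutation $\sigma$ of $\{1,\dots,n\}$ is identified with its permutation matrix ($M_\sigma(i,j)=1$ iff $i=\sigma(j)$); a permutation class is a set of permutations closed under taking submatrices that are permutation matrices (i.e. under taking patterns). A quasi-permutation matrix is a binary matrix with at most one $1$ per row and per column. A polyomino is a finite edge-connected union of unit cells of $\mathbb{Z}^2$ up to translation, identified with the binary matrix of its minimal bounding rectangle ($1$ for cells, $0$ otherwise); a polyomino class is a set of polyominoes closed under taking submatrices that are polyominoes. $Av_{\mathfrak{S}}(\mathcal{M})$ (resp. $Av_{\mathfrak{P}}(\mathcal{M})$) denotes the set of permutations (resp. polyominoes) having no submatrix in $\mathcal{M}$. Write $Av$ for $Av_{\mathfrak{S}}$ (permutation case) or $Av_{\mathfrak{P}}$ (polyomino case). For a class $\mathcal{C}$, $\mathcal{C}^+$ is the set of binary matrices that are submatrices of some element of $\mathcal{C}$; the canonical $m$-basis of $\mathcal{C}$ is the set of $\preccurlyeq$-minimal quasi-permutation matrices (permutation case), resp. binary matrices (polyomino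 case), not in $\mathcal{C}^+$. An $m$-basis of $\mathcal{C}$ is an antichain $\mathcal{M}$ (for $\preccurlyeq$) of matrices with $\mathcal{C}=Av(\mathcal{M})$. A minimal $m$-basis of $\mathcal{C}$ is an $m$-basis $\mathcal{M}$ such that (1) no strict subset $\mathcal{M}'\subsetneq\mathcal{M}$ satisfies $\mathcal{C}=Av(\mathcal{M}')$, and (2) for every $M\in\mathcal{M}$ and every submatrix $M'\preccurlyeq M$, either $M'=M$ or $\mathcal{C}\neq Av\big((\mathcal{M}\setminus\{M\})\cup\{M'\}\big)$. *)

theory Defs
  imports Main
begin

text \<open>A binary matrix of size m x n is represented as a triple (m, n, S) where
  S is the set of (0-based) positions (row, column) holding a 1.\<close>
type_synonym bmat = "nat \<times> nat \<times> (nat \<times> nat) set"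

definition wf_mat :: "bmat \<Rightarrow> bool" where
  "wf_mat M \<longleftrightarrow> (case M of (m, n, S) \<Rightarrow> S \<subseteq> {..<m} \<times> {..<n})"

definition submat :: "bmat \<Rightarrow> bmat \<Rightarrow> bool" where
  "submat M' M \<longleftrightarrow> wf_mat M \<and>
     (case M' of (m', n', S') \<Rightarrow> case M of (m, n, S) \<Rightarrow>
       (\<exists>r c. strict_mono_on {..<m'} r \<and> (\<forall>i<m'. r i < m) \<and>
              strict_mono_on {..<n'} c \<and> (\<forall>j<n'. c j < n) \<and>
              S' = {(i, j). i < m' \<and> j < n' \<and> (r i, c j) \<in> S}))"

definition is_perm_mat :: "bmat \<Rightarrow> bool" where
  "is_perm_mat M \<longleftrightarrow> (\<exists>n \<sigma>. bij_betw \<sigma> {..<n} {..<n} \<and>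
      M = (n, n, {(\<sigma> j, j) | j. j < n}))"

definition is_quasi_perm :: "bmat \<Rightarrow> bool" where
  "is_quasi_perm M \<longleftrightarrow> wf_mat M \<and> (case M of (m, n, S) \<Rightarrow>
      (\<forall>i j j'. (i, j) \<in> S \<longrightarrow> (i, j') \<in> S \<longrightarrow> j = j') \<and>
      (\<forall>i i' j. (i, j) \<in> S \<longrightarrow> (i', j) \<in> S \<longrightarrow> i = i'))"

definition cell_adj :: "nat \<times> nat \<Rightarrow> nat \<times> nat \<Rightarrow> bool" where
  "cell_adj p q \<longleftrightarrow> (fst p = fst q \<and> (snd p = Suc (snd q) \<or> snd q = Suc (snd p))) \<or>
                     (snd p = snd q \<and> (fst p = Suc (fst q) \<or> fst q = Suc (fst p)))"

text \<open>A polyomino: nonempty, edge-connected set of cells, given by the binary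
  matrix of its minimal bounding rectangle (every row and column contains a cell).\<close>
definition is_polyomino :: "bmat \<Rightarrow> bool" where
  "is_polyomino M \<longleftrightarrow> wf_mat M \<and> (case M of (m, n, S) \<Rightarrow>
      S \<noteq> {} \<and>
      (\<forall>i<m. \<exists>j. (i, j) \<in> S) \<and> (\<forall>j<n. \<exists>i. (i, j) \<in> S) \<and>
      (\<forall>p\<in>S. \<forall>q\<in>S. (\<lambda>x y. x \<in> S \<and> y \<in> S \<and> cell_adj x y)\<^sup>*\<^sup>* p q))"

definition is_class :: "(bmat \<Rightarrow> bool) \<Rightarrow> bmat set \<Rightarrow> bool" where
  "is_class P C \<longleftrightarrow> (\<forall>M\<in>C. P M) \<and> (\<forall>M\<in>C. \<forall>M'. submat M' M \<and> P M' \<longrightarrow> M' \<in> C)"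

definition perm_class :: "bmat set \<Rightarrow> bool" where
  "perm_class C \<longleftrightarrow> is_class is_perm_mat C"

definition polyomino_class :: "bmat set \<Rightarrow> bool" where
  "polyomino_class C \<longleftrightarrow> is_class is_polyomino C"

definition Av :: "(bmat \<Rightarrow> bool) \<Rightarrow> bmat set \<Rightarrow> bmat set" where
  "Av P Ms = {M. P M \<and> \<not> (\<exists>B\<in>Ms. submat B M)}"

abbreviation Av_S :: "bmat set \<Rightarrow> bmat set" where "Av_S \<equiv> Av is_perm_mat"
abbreviation Av_P :: "bmat set \<Rightarrow> bmat set" where "Av_P \<equiv> Av is_polyomino"

definition Cplus :: "bmat set \<Rightarrow> bmat set" where
  "Cplus C = {M'. \<exists>M\<in>C. submat M' M}"

definition canon_basis :: "(bmat \<Rightarrow> bool) \<Rightarrow> bmat set \<Rightarrow> bmat set" where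
  "canon_basis Q C = {M. Q M \<and> M \<notin> Cplus C \<and>
      (\<forall>M'. submat M' M \<and> M' \<noteq> M \<and> Q M' \<longrightarrow> M' \<in> Cplus C)}"

definition canon_basis_S :: "bmat set \<Rightarrow> bmat set" where
  "canon_basis_S C = canon_basis is_quasi_perm C"

definition canon_basis_P :: "bmat set \<Rightarrow> bmat set" where
  "canon_basis_P C = canon_basis wf_mat C"

definition antichain :: "bmat set \<Rightarrow> bool" where
  "antichain Ms \<longleftrightarrow> (\<forall>A\<in>Ms. \<forall>B\<in>Ms. submat A B \<longrightarrow> A = B)"

definition m_basis :: "(bmat \<Rightarrow> bool) \<Rightarrow> bmat set \<Rightarrow> bmat set \<Rightarrow> bool" where
  "m_basis P C Ms \<longleftrightarrow> (\<forall>M\<in>Ms. wf_mat M) \<and> antichain Ms \<and> C = Av P Ms"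

definition minimal_m_basis :: "(bmat \<Rightarrow> bool) \<Rightarrow> bmat set \<Rightarrow> bmat set \<Rightarrow> bool" where
  "minimal_m_basis P C Ms \<longleftrightarrow> m_basis P C Ms \<and>
     (\<forall>Ms'. Ms' \<subset> Ms \<longrightarrow> C \<noteq> Av P Ms') \<and>
     (\<forall>M\<in>Ms. \<forall>M'. submat M' M \<longrightarrow> M' = M \<or> C \<noteq> Av P ((Ms - {M}) \<union> {M'}))"

end

theory Submission
  imports Defs
begin

text \<open>A basis element M of a minimal m-basis B
  is needed, so some object of the ambient kind contains M but avoids B - {M};
  hence M lies below an object and is of the right shape (a quasi-permutation
  matrix, resp. a binary matrix), and M itself is not in C+. If some proper
  submatrix M' of the right shape were also outside C+, swapping M for M' would
  not change the avoided class, contradicting minimality; so M is in the canonical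
  m-basis. Conversely every element of the canonical m-basis is minimal outside C+,
  so no two are comparable, and any replacement M' by a proper submatrix lies in C+,
  i.e. below some element of C, which then no longer avoids the new set.\<close>

lemma submat_wf: "submat M' M \<Longrightarrow> wf_mat M'"
  unfolding submat_def wf_mat_def by (auto split: prod.splits)

lemma submat_trans:
  assumes "submat A B" and "submat B C"
  shows "submat A C"
proof -
  obtain ma na SA mb nb SB mc nc SC
    where A: "A = (ma, na, SA)" and B: "B = (mb, nb, SB)" and C: "C = (mc, nc, SC)"
    by (metis prod.exhaust)
  from \<open>submat A B\<close> obtain r1 c1 where
    r1: "strict_mono_on {..<ma} r1" "\<forall>i<ma. r1 i < mb" and
    c1: "strict_mono_on {..<na} c1" "\<forall>j<na. c1 j < nb" and
    SA: "SA = {(i, j). i < ma \<and> j < na \<and> (r1 i, c1 j) \<in> SB}"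
    unfolding submat_def A B by auto
  from \<open>submat B C\<close> obtain r2 c2 where
    r2: "strict_mono_on {..<mb} r2" "\<forall>i<mb. r2 i < mc" and
    c2: "strict_mono_on {..<nb} c2" "\<forall>j<nb. c2 j < nc" and
    SB: "SB = {(i, j). i < mb \<and> j < nb \<and> (r2 i, c2 j) \<in> SC}" and
    "wf_mat C"
    unfolding submat_def B C by auto
  have "strict_mono_on {..<ma} (r2 \<circ> r1)" "strict_mono_on {..<na} (c2 \<circ> c1)"
    using r1 r2 c1 c2 unfolding strict_mono_on_def by auto
  moreover have "SA = {(i, j). i < ma \<and> j < na \<and> ((r2 \<circ> r1) i, (c2 \<circ> c1) j) \<in> SC}"
    using SA SB r1 c1 by auto
  ultimately show ?thesis
    using \<open>wf_mat C\<close> r1 r2 c1 c2 unfolding submat_def A C prod.case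
    by (intro conjI exI[of _ "r2 \<circ> r1"] exI[of _ "c2 \<circ> c1"]) auto
qed

lemma is_quasi_perm_submat:
  assumes "is_quasi_perm M" and "submat M' M"
  shows "is_quasi_perm M'"
proof -
  obtain m n S m' n' S' where M: "M = (m, n, S)" and M': "M' = (m', n', S')"
    by (metis prod.exhaust)
  from \<open>submat M' M\<close> obtain r c where
    r: "strict_mono_on {..<m'} r" and c: "strict_mono_on {..<n'} c" and
    S': "S' = {(i, j). i < m' \<and> j < n' \<and> (r i, c j) \<in> S}"
    unfolding submat_def M M' by auto
  from \<open>is_quasi_perm M\<close> have
    rows: "\<And>i j j'. (i, j) \<in> S \<Longrightarrow> (i, j') \<in> S \<Longrightarrow> j = j'" and
    cols: "\<And>i i' j. (i, j) \<in> S \<Longrightarrow> (i', j) \<in> S \<Longrightarrow> i = i'"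
    unfolding is_quasi_perm_def M by auto
  have "j = j'" if "(i, j) \<in> S'" "(i, j') \<in> S'" for i j j'
    using that rows[of "r i" "c j" "c j'"] strict_mono_on_eqD[OF c] unfolding S' by auto
  moreover have "i = i'" if "(i, j) \<in> S'" "(i', j) \<in> S'" for i i' j
    using that cols[of "r i" "c j" "r i'"] strict_mono_on_eqD[OF r] unfolding S' by auto
  ultimately show ?thesis
    using submat_wf[OF \<open>submat M' M\<close>] unfolding is_quasi_perm_def M' by auto
qed

lemma is_perm_mat_imp_is_quasi_perm: "is_perm_mat M \<Longrightarrow> is_quasi_perm M"
  unfolding is_perm_mat_def is_quasi_perm_def wf_mat_def
  by (auto simp: bij_betw_def inj_on_def)

lemma antichain_canon_basis: "antichain (canon_basis Q C)"
  unfolding antichain_def canon_basis_def by blast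

lemma antichain_subset: "antichain Ms \<Longrightarrow> Ms' \<subseteq> Ms \<Longrightarrow> antichain Ms'"
  unfolding antichain_def by blast

lemma Av_basis_not_in_Cplus:
  assumes "C = Av P B" and "M \<in> B"
  shows "M \<notin> Cplus C"
  using assms unfolding Cplus_def Av_def by blast

lemma Av_ne_if_Cplus:
  assumes "M \<in> Ms" and "M \<in> Cplus C"
  shows "C \<noteq> Av P Ms"
  using assms unfolding Cplus_def Av_def by blast

lemma Av_replace_by_submat_not_in_Cplus:
  assumes "C = Av P B" and "submat M' M" and "M' \<notin> Cplus C"
  shows "Av P ((B - {M}) \<union> {M'}) = C"
  using assms submat_trans[OF \<open>submat M' M\<close>] unfolding Cplus_def Av_def by blast

lemma minimal_m_basis_subset_canon_basis:
  assumes shape: "\<And>M N. P N \<Longrightarrow> submat M N \<Longrightarrow> Q M"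
    and "minimal_m_basis P C B"
  shows "B \<subseteq> canon_basis Q C"
proof
  fix M assume "M \<in> B"
  from \<open>minimal_m_basis P C B\<close> have C: "C = Av P B"
    and irredundant: "\<And>B'. B' \<subset> B \<Longrightarrow> C \<noteq> Av P B'"
    and irreplaceable: "\<And>M'. submat M' M \<Longrightarrow> M' = M \<or> C \<noteq> Av P ((B - {M}) \<union> {M'})"
    using \<open>M \<in> B\<close> unfolding minimal_m_basis_def m_basis_def by blast+
  have "C \<noteq> Av P (B - {M})"
    using \<open>M \<in> B\<close> by (intro irredundant) blast
  then obtain N where "P N" "submat M N"
    unfolding C Av_def by blast
  then have "Q M" by (rule shape)
  moreover have "M \<notin> Cplus C"
    using C \<open>M \<in> B\<close> by (rule Av_basis_not_in_Cplus)
  moreover have "M' \<in> Cplus C" if "submat M' M" "M' \<noteq> M" for M'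
    using irreplaceable[OF \<open>submat M' M\<close>] Av_replace_by_submat_not_in_Cplus[OF C \<open>submat M' M\<close>]
      \<open>M' \<noteq> M\<close> by auto
  ultimately show "M \<in> canon_basis Q C"
    unfolding canon_basis_def by blast
qed

lemma minimal_m_basis_iff_canon_basis:
  assumes wf: "\<And>M. Q M \<Longrightarrow> wf_mat M"
    and shape: "\<And>M N. P N \<Longrightarrow> submat M N \<Longrightarrow> Q M"
    and Q_submat: "\<And>M M'. Q M \<Longrightarrow> submat M' M \<Longrightarrow> Q M'"
  shows "minimal_m_basis P C B \<longleftrightarrow>
     (B \<subseteq> canon_basis Q C \<and> C = Av P B \<and> (\<forall>B'. B' \<subset> B \<longrightarrow> C \<noteq> Av P B'))"
proof
  assume minimal: "minimal_m_basis P C B"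
  have "B \<subseteq> canon_basis Q C"
    using minimal_m_basis_subset_canon_basis[OF shape minimal] .
  with minimal show "B \<subseteq> canon_basis Q C \<and> C = Av P B \<and> (\<forall>B'. B' \<subset> B \<longrightarrow> C \<noteq> Av P B')"
    unfolding minimal_m_basis_def m_basis_def by (elim conjE) (intro conjI)
next
  assume "B \<subseteq> canon_basis Q C \<and> C = Av P B \<and> (\<forall>B'. B' \<subset> B \<longrightarrow> C \<noteq> Av P B')"
  then have canon: "B \<subseteq> canon_basis Q C" and C: "C = Av P B"
    and irredundant: "\<forall>B'. B' \<subset> B \<longrightarrow> C \<noteq> Av P B'" by blast+
  have "wf_mat M" if "M \<in> B" for M
    using that canon wf unfolding canon_basis_def by blast
  moreover have "antichain B"
    using antichain_canon_basis canon by (rule antichain_subset)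
  moreover have "C \<noteq> Av P ((B - {M}) \<union> {M'})"
    if "M \<in> B" "submat M' M" "M' \<noteq> M" for M M'
  proof -
    have "M \<in> canon_basis Q C" using \<open>M \<in> B\<close> canon by blast
    then have "M' \<in> Cplus C"
      using Q_submat \<open>submat M' M\<close> \<open>M' \<noteq> M\<close> unfolding canon_basis_def by blast
    then show ?thesis by (intro Av_ne_if_Cplus) blast+
  qed
  ultimately show "minimal_m_basis P C B"
    unfolding minimal_m_basis_def m_basis_def using C irredundant by blast
qed

theorem proposition5:
  shows "(\<forall>C. perm_class C \<longrightarrow> (\<forall>B. minimal_m_basis is_perm_mat C B \<longleftrightarrow>
            (B \<subseteq> canon_basis_S C \<and> C = Av_S B \<and> (\<forall>B'. B' \<subset> B \<longrightarrow> C \<noteq> Av_S B')))) \<and>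
         (\<forall>C. polyomino_class C \<longrightarrow> (\<forall>B. minimal_m_basis is_polyomino C B \<longleftrightarrow>
            (B \<subseteq> canon_basis_P C \<and> C = Av_P B \<and> (\<forall>B'. B' \<subset> B \<longrightarrow> C \<noteq> Av_P B'))))"
proof -
  have perm_shape: "is_quasi_perm M" if "is_perm_mat N" "submat M N" for M N
    using is_quasi_perm_submat[OF is_perm_mat_imp_is_quasi_perm] that .
  have quasi_wf: "wf_mat M" if "is_quasi_perm M" for M
    using that unfolding is_quasi_perm_def by (elim conjE)
  note perm = minimal_m_basis_iff_canon_basis[of is_quasi_perm is_perm_mat,
      OF quasi_wf perm_shape is_quasi_perm_submat, folded canon_basis_S_def]
  note poly = minimal_m_basis_iff_canon_basis[of wf_mat is_polyomino,
      OF asm_rl submat_wf submat_wf, folded canon_basis_P_def]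
  show ?thesis
    by (simp only: perm poly) blast
qed

end
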